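(* For every $n\in\mathbb{N}$, $g\big[\mathbf{RP}_n(\mathbb{R})\big] > \frac{1}{641}\,n^{1.669}$.
   Context: For an $n\times n$ complex matrix $A=(a_{i,j})$, Gaussian elimination without pivoting is the recursion $a^{(1)}_{i,j}=a_{i,j}$ and $a^{(k+1)}_{i,j}=a^{(k)}_{i,j}-a^{(k)}_{i,k}a^{(k)}_{k,j}/a^{(k)}_{k,k}$ for $k+1\le i,j\le n$, $k=1,\dots,n-1$ (defined when all pivots $a^{(k)}_{k,k}\neq0$). The growth factor is $g(A)=\max_{i,j,k}|a^{(k)}_{i,j}|/\max_{i,j}|a_{i,j}|$. For $S\subseteq\mathbb{C}$, $\mathbf{RP}_n(S)$ (rook pivoted matrices) is the set of invertible $A\in S^{n\times n}$ for which elimination without pivoting is defined and $|a^{(k)}_{i,k}|\le|a^{(k)}_{k,k}|$ and $|a^{(k)}_{k,j}|\le|a^{(k)}_{k,k}|$ for all $k$ and all $i,j\ge k$. For a set $\mathbf{X}$ of matrices, $g[\mathbf{X}]=\sup_{A\in\mathbf{X}}g(A)$. *)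

theory Defs
  imports Complex_Main "HOL-Library.Extended_Real"
begin

text \<open>n x n complex matrices are represented as functions nat => nat => complex,
  only the entries with indices 0..<n are relevant (0-based indexing:
  paper index i corresponds to i-1 here).\<close>

text \<open>Gaussian elimination without pivoting: ge A k i j is the paper's
  a^(k+1)_{i+1,j+1}.  Entries outside the active block are left unchanged.\<close>
fun ge :: "(nat \<Rightarrow> nat \<Rightarrow> complex) \<Rightarrow> nat \<Rightarrow> nat \<Rightarrow> nat \<Rightarrow> complex" where
  "ge A 0 i j = A i j"
| "ge A (Suc k) i j =
     (if k < i \<and> k < j
      then ge A k i j - ge A k i k * ge A k k j / ge A k k k
      else ge A k i j)"

definition invertible_mat :: "nat \<Rightarrow> (nat \<Rightarrow> nat \<Rightarrow> complex) \<Rightarrow> bool" where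
  "invertible_mat n A \<longleftrightarrow> (\<exists>B. \<forall>i<n. \<forall>j<n.
      (\<Sum>l<n. A i l * B l j) = (if i = j then 1 else 0))"

definition ge_defined :: "nat \<Rightarrow> (nat \<Rightarrow> nat \<Rightarrow> complex) \<Rightarrow> bool" where
  "ge_defined n A \<longleftrightarrow> (\<forall>k. k + 1 < n \<longrightarrow> ge A k k k \<noteq> 0)"

definition growth_factor :: "nat \<Rightarrow> (nat \<Rightarrow> nat \<Rightarrow> complex) \<Rightarrow> real" where
  "growth_factor n A =
     Max {norm (ge A k i j) | k i j. k < n \<and> k \<le> i \<and> i < n \<and> k \<le> j \<and> j < n}
     / Max {norm (A i j) | i j. i < n \<and> j < n}"

definition RP :: "nat \<Rightarrow> complex set \<Rightarrow> (nat \<Rightarrow> nat \<Rightarrow> complex) set" where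
  "RP n S = {A. (\<forall>i<n. \<forall>j<n. A i j \<in> S) \<and> invertible_mat n A \<and> ge_defined n A \<and>
      (\<forall>k<n. \<forall>i. k \<le> i \<and> i < n \<longrightarrow>
          norm (ge A k i k) \<le> norm (ge A k k k) \<and> norm (ge A k k i) \<le> norm (ge A k k k))}"

definition growth_sup :: "nat \<Rightarrow> (nat \<Rightarrow> nat \<Rightarrow> complex) set \<Rightarrow> ereal" where
  "growth_sup n X = (SUP A\<in>X. ereal (growth_factor n A))"

end

theory Submission
  imports Defs "Jordan_Normal_Form.Determinant"
begin

text \<open>If A = L D U with unit triangular factors whose entries are bounded by 1 in modulus,
  elimination without pivoting reproduces the factorisation: the k-th pivot is d k, and the
  k-th pivot column and row are d k times the k-th column of L and row of U.  So A is rook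
  pivoted, and if its entries are bounded by 1 its growth factor is at least every |d k|.
  Such factorisations are closed under Kronecker products, where the pivots multiply, and
  under padding by an identity block.  An explicit real 36 x 36 example whose last pivot
  exceeds 400 \<ge> 36 powr 1.669 thus gives, for 36^k \<le> n < 36^(k+1), a matrix in RP n with
  growth at least 400^k > n powr 1.669 / 400.\<close>

definition ldu :: "nat \<Rightarrow> (nat \<Rightarrow> nat \<Rightarrow> 'a::comm_semiring_0) \<Rightarrow> (nat \<Rightarrow> 'a) \<Rightarrow> (nat \<Rightarrow> nat \<Rightarrow> 'a)
    \<Rightarrow> nat \<Rightarrow> nat \<Rightarrow> 'a" where
  "ldu n L d U i j = (\<Sum>l<n. L i l * d l * U l j)"

definition unit_lower :: "(nat \<Rightarrow> nat \<Rightarrow> 'a::{zero,one}) \<Rightarrow> bool" where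
  "unit_lower L \<longleftrightarrow> (\<forall>i l. i < l \<longrightarrow> L i l = 0) \<and> (\<forall>i. L i i = 1)"

definition unit_upper :: "(nat \<Rightarrow> nat \<Rightarrow> 'a::{zero,one}) \<Rightarrow> bool" where
  "unit_upper U \<longleftrightarrow> unit_lower (\<lambda>i j. U j i)"

lemma unit_lower_eq_0: "unit_lower L \<Longrightarrow> i < l \<Longrightarrow> L i l = 0"
  and unit_lower_diag: "unit_lower L \<Longrightarrow> L i i = 1"
  by (simp_all add: unit_lower_def)

lemma unit_upper_eq_0: "unit_upper U \<Longrightarrow> j < l \<Longrightarrow> U l j = 0"
  and unit_upper_diag: "unit_upper U \<Longrightarrow> U l l = 1"
  by (simp_all add: unit_upper_def unit_lower_def)

subsection \<open>Elimination of an LDU product\<close>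

lemma sum_ldu_tail_row:
  fixes L U :: "nat \<Rightarrow> nat \<Rightarrow> 'a::comm_semiring_1"
  assumes "unit_lower L" "k < n"
  shows "(\<Sum>l\<in>{k..<n}. L k l * d l * U l j) = d k * U k j"
proof -
  have "(\<Sum>l\<in>{k..<n}. L k l * d l * U l j) = (\<Sum>l\<in>{k..<n}. if l = k then d k * U k j else 0)"
    using assms(1) by (intro sum.cong) (auto simp: unit_lower_eq_0 unit_lower_diag)
  then show ?thesis using assms(2) by simp
qed

lemma sum_ldu_tail_col:
  fixes L U :: "nat \<Rightarrow> nat \<Rightarrow> 'a::comm_semiring_1"
  assumes "unit_upper U" "k < n"
  shows "(\<Sum>l\<in>{k..<n}. L i l * d l * U l k) = L i k * d k"
proof -
  have "(\<Sum>l\<in>{k..<n}. L i l * d l * U l k) = (\<Sum>l\<in>{k..<n}. if l = k then L i k * d k else 0)"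
    using assms(1) by (intro sum.cong) (auto simp: unit_upper_eq_0 unit_upper_diag)
  then show ?thesis using assms(2) by simp
qed

lemma ge_ldu:
  fixes L U :: "nat \<Rightarrow> nat \<Rightarrow> complex"
  assumes L: "unit_lower L" and U: "unit_upper U" and d: "\<forall>l<n. d l \<noteq> 0"
  shows "k \<le> i \<Longrightarrow> k \<le> j \<Longrightarrow> i < n \<Longrightarrow> j < n \<Longrightarrow>
    ge (ldu n L d U) k i j = (\<Sum>l\<in>{k..<n}. L i l * d l * U l j)"
proof (induction k arbitrary: i j)
  case 0
  then show ?case by (simp add: ldu_def atLeast0LessThan)
next
  case (Suc k)
  then have "k < n" "k < i" "k < j" by auto
  have "ge (ldu n L d U) k i j = L i k * d k * U k j + (\<Sum>l\<in>{Suc k..<n}. L i l * d l * U l j)"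
    using Suc \<open>k < n\<close> by (simp add: sum.atLeast_Suc_lessThan)
  moreover have "ge (ldu n L d U) k i k = L i k * d k"
    using Suc.IH[of i k] Suc.prems sum_ldu_tail_col[OF U \<open>k < n\<close>] by simp
  moreover have "ge (ldu n L d U) k k j = d k * U k j"
    using Suc.IH[of k j] Suc.prems \<open>k < n\<close> sum_ldu_tail_row[OF L \<open>k < n\<close>] by simp
  moreover have "ge (ldu n L d U) k k k = d k"
    using Suc.IH[of k k] \<open>k < n\<close> sum_ldu_tail_row[OF L \<open>k < n\<close>] unit_upper_diag[OF U] by simp
  \<comment> \<open>the elimination step subtracts exactly the rank-one term l = k of the sum\<close>
  ultimately show ?case
    using \<open>k < i\<close> \<open>k < j\<close> d \<open>k < n\<close> by (simp add: field_simps)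
qed

lemma ge_ldu_pivot:
  fixes L U :: "nat \<Rightarrow> nat \<Rightarrow> complex"
  assumes L: "unit_lower L" and U: "unit_upper U" and d: "\<forall>l<n. d l \<noteq> 0" and "k < n"
  shows "ge (ldu n L d U) k k k = d k"
    and "k \<le> i \<Longrightarrow> i < n \<Longrightarrow> ge (ldu n L d U) k i k = L i k * d k"
    and "k \<le> j \<Longrightarrow> j < n \<Longrightarrow> ge (ldu n L d U) k k j = d k * U k j"
  using ge_ldu[OF assms(1-3)] sum_ldu_tail_row[OF L \<open>k < n\<close>] sum_ldu_tail_col[OF U \<open>k < n\<close>]
    unit_upper_diag[OF U] \<open>k < n\<close> by auto

lemma invertible_mat_if_det_nonzero:
  assumes "det (mat n n (\<lambda>(i, j). A i j)) \<noteq> 0"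
  shows "Defs.invertible_mat n A"
proof -
  let ?M = "mat n n (\<lambda>(i, j). A i j)"
  have "?M \<in> Units (ring_mat TYPE(complex) n undefined)"
    by (rule det_non_zero_imp_unit[OF mat_carrier assms])
  then obtain B where B: "B \<in> carrier_mat n n" and MB: "?M * B = 1\<^sub>m n"
    unfolding Units_def ring_mat_def
    by (simp only: mem_Collect_eq partial_object.select_convs monoid.select_convs) blast
  have "(\<Sum>l<n. A i l * B $$ (l, j)) = (if i = j then 1 else 0)" if "i < n" "j < n" for i j
  proof -
    have "(\<Sum>l<n. A i l * B $$ (l, j)) = (?M * B) $$ (i, j)"
      using that B by (simp add: scalar_prod_def atLeast0LessThan)
    also have "\<dots> = 1\<^sub>m n $$ (i, j)"
      by (simp only: MB)
    finally show ?thesis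
      using that by simp
  qed
  then show ?thesis
    unfolding Defs.invertible_mat_def by (intro exI[of _ "\<lambda>l j. B $$ (l, j)"]) simp
qed

lemma det_unit_lower_times_upper:
  fixes L W :: "nat \<Rightarrow> nat \<Rightarrow> 'a::comm_ring_1"
  assumes "unit_lower L" and "\<And>l j. j < l \<Longrightarrow> W l j = 0"
  shows "det (mat n n (\<lambda>(i, j). \<Sum>l<n. L i l * W l j)) = (\<Prod>i<n. W i i)"
proof -
  have "mat n n (\<lambda>(i, j). \<Sum>l<n. L i l * W l j) = mat n n (\<lambda>(i, j). L i j) * mat n n (\<lambda>(i, j). W i j)"
    by (rule eq_matI) (auto simp: scalar_prod_def atLeast0LessThan)
  also have "det \<dots> = det (mat n n (\<lambda>(i, j). L i j)) * det (mat n n (\<lambda>(i, j). W i j))"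
    by (rule det_mult) auto
  also have "det (mat n n (\<lambda>(i, j). L i j)) = 1"
    by (subst det_lower_triangular[of n])
      (auto simp: assms(1) unit_lower_eq_0 unit_lower_diag prod_list_diag_prod)
  also have "det (mat n n (\<lambda>(i, j). W i j)) = (\<Prod>i<n. W i i)"
    by (subst det_upper_triangular[of _ n])
      (auto simp: assms(2) upper_triangular_def prod_list_diag_prod atLeast0LessThan)
  finally show ?thesis by simp
qed

lemma invertible_ldu:
  fixes L U :: "nat \<Rightarrow> nat \<Rightarrow> complex"
  assumes "unit_lower L" "unit_upper U" "\<forall>l<n. d l \<noteq> 0"
  shows "Defs.invertible_mat n (ldu n L d U)"
proof (rule invertible_mat_if_det_nonzero)
  have "det (mat n n (\<lambda>(i, j). ldu n L d U i j)) = (\<Prod>i<n. d i * U i i)"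
    using det_unit_lower_times_upper[of L "\<lambda>l j. d l * U l j" n] assms(1,2)
    by (simp add: ldu_def mult.assoc unit_upper_eq_0)
  then show "det (mat n n (\<lambda>(i, j). ldu n L d U i j)) \<noteq> 0"
    using assms(2,3) by (simp add: unit_upper_diag)
qed

subsection \<open>Rook pivoted LDU factorisations\<close>

text \<open>The factors are total functions; triangularity and the bounds on L and U are imposed at
  every index, which keeps the notion stable under Kronecker products and padding.\<close>

definition rook_ldu :: "nat \<Rightarrow> (nat \<Rightarrow> nat \<Rightarrow> complex) \<Rightarrow> (nat \<Rightarrow> complex) \<Rightarrow> (nat \<Rightarrow> nat \<Rightarrow> complex)
    \<Rightarrow> bool" where
  "rook_ldu n L d U \<longleftrightarrow> unit_lower L \<and> unit_upper U \<and>
     (\<forall>i j. L i j \<in> \<real> \<and> U i j \<in> \<real> \<and> norm (L i j) \<le> 1 \<and> norm (U i j) \<le> 1) \<and>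
     (\<forall>l<n. d l \<in> \<real> \<and> d l \<noteq> 0) \<and> (\<forall>i<n. \<forall>j<n. norm (ldu n L d U i j) \<le> 1)"

lemma rook_ldu_in_RP:
  assumes "rook_ldu n L d U"
  shows "ldu n L d U \<in> RP n \<real>"
proof -
  have L: "unit_lower L" and U: "unit_upper U" and d: "\<forall>l<n. d l \<noteq> 0"
    using assms by (simp_all add: rook_ldu_def)
  note pivots = ge_ldu_pivot[OF L U d]
  have "ldu n L d U i j \<in> \<real>" for i j
    using assms unfolding rook_ldu_def ldu_def by (auto intro!: sum_in_Reals Reals_mult)
  moreover have "ge_defined n (ldu n L d U)"
    using pivots(1) d by (simp add: ge_defined_def)
  moreover have "norm (ge (ldu n L d U) k i k) \<le> norm (ge (ldu n L d U) k k k) \<and>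
      norm (ge (ldu n L d U) k k i) \<le> norm (ge (ldu n L d U) k k k)"
    if "k < n" "k \<le> i" "i < n" for k i
    using pivots[OF \<open>k < n\<close>] that assms
    by (simp add: rook_ldu_def norm_mult mult_left_le_one_le mult_right_le_one_le)
  ultimately show ?thesis
    using invertible_ldu[OF L U d] unfolding RP_def by blast
qed

lemma growth_factor_rook_ldu:
  assumes "rook_ldu n L d U" "p < n"
  shows "norm (d p) \<le> growth_factor n (ldu n L d U)"
proof -
  define A where "A = ldu n L d U"
  define G where "G = {norm (ge A k i j) | k i j. k < n \<and> k \<le> i \<and> i < n \<and> k \<le> j \<and> j < n}"
  define E where "E = {norm (A i j) | i j. i < n \<and> j < n}"
  have "finite G"
    by (rule finite_subset[of _ "(\<lambda>(k, i, j). norm (ge A k i j)) ` ({..<n} \<times> {..<n} \<times> {..<n})"])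
      (auto simp: G_def intro!: image_eqI[where x = "(k, i, j)" for k i j])
  have "finite E"
    by (rule finite_subset[of _ "(\<lambda>(i, j). norm (A i j)) ` ({..<n} \<times> {..<n})"])
      (auto simp: E_def intro!: image_eqI[where x = "(i, j)" for i j])
  have L: "unit_lower L" and U: "unit_upper U" and d: "\<forall>l<n. d l \<noteq> 0"
    using assms(1) by (simp_all add: rook_ldu_def)
  note pivot = ge_ldu_pivot(1)[OF L U d, folded A_def]
  have "norm (d p) \<in> G"
    unfolding G_def using pivot[OF assms(2)] assms(2) by force
  then have "norm (d p) \<le> Max G"
    using \<open>finite G\<close> by simp
  have "0 < n" using assms(2) by simp
  then have "norm (d 0) \<in> E"
    unfolding E_def using pivot[of 0] by force
  then have "norm (d 0) \<le> Max E"
    using \<open>finite E\<close> by simp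
  then have "0 < Max E"
    using d \<open>0 < n\<close> by (smt (verit) zero_less_norm_iff)
  moreover have "Max E \<le> 1"
    using \<open>finite E\<close> \<open>norm (d 0) \<in> E\<close> assms(1)
    by (intro Max.boundedI) (auto simp: E_def A_def rook_ldu_def)
  moreover have "0 \<le> Max G"
    using \<open>norm (d p) \<le> Max G\<close> by (rule order_trans[OF norm_ge_zero])
  ultimately have "Max G \<le> Max G / Max E"
    by (simp add: le_divide_eq mult_right_le_one_le)
  then show ?thesis
    using \<open>norm (d p) \<le> Max G\<close> unfolding growth_factor_def A_def G_def E_def by linarith
qed

lemma growth_sup_ge_pivot:
  assumes "rook_ldu n L d U" "p < n"
  shows "ereal (norm (d p)) \<le> growth_sup n (RP n \<real>)"
proof -
  have "ereal (norm (d p)) \<le> ereal (growth_factor n (ldu n L d U))"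
    using growth_factor_rook_ldu[OF assms] by simp
  also have "\<dots> \<le> growth_sup n (RP n \<real>)"
    unfolding growth_sup_def using rook_ldu_in_RP[OF assms(1)] by (rule SUP_upper)
  finally show ?thesis .
qed

subsection \<open>Kronecker products and padding\<close>

text \<open>The right factor is m x m, so index (a, b) of the product is a * m + b.\<close>

definition kron :: "nat \<Rightarrow> (nat \<Rightarrow> nat \<Rightarrow> 'a::times) \<Rightarrow> (nat \<Rightarrow> nat \<Rightarrow> 'a) \<Rightarrow> nat \<Rightarrow> nat \<Rightarrow> 'a" where
  "kron m X Y i j = X (i div m) (j div m) * Y (i mod m) (j mod m)"

definition kron_vec :: "nat \<Rightarrow> (nat \<Rightarrow> 'a::times) \<Rightarrow> (nat \<Rightarrow> 'a) \<Rightarrow> nat \<Rightarrow> 'a" where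
  "kron_vec m x y l = x (l div m) * y (l mod m)"

lemma kron_vec_index: "b < m \<Longrightarrow> kron_vec m x y (a * m + b) = x a * y b"
  by (simp add: kron_vec_def)

lemma sum_div_mod:
  fixes h :: "nat \<Rightarrow> nat \<Rightarrow> 'a::comm_monoid_add"
  shows "(\<Sum>l<M * m. h (l div m) (l mod m)) = (\<Sum>a<M. \<Sum>b<m. h a b)"
proof -
  have "(\<Sum>l\<in>{a * m..<a * m + m}. h (l div m) (l mod m)) = (\<Sum>b<m. h a b)" for a
  proof (rule sum.reindex_bij_witness[of _ "\<lambda>b. a * m + b" "\<lambda>l. l - a * m"])
    fix l
    assume "l \<in> {a * m..<a * m + m}"
    then obtain r where "r < m" "l = a * m + r"
      by (metis atLeastLessThan_iff add_less_cancel_left le_add_diff_inverse)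
    then show "h a (l - a * m) = h (l div m) (l mod m)"
      by simp
  qed auto
  then show ?thesis
    using sum.nat_group[of "\<lambda>l. h (l div m) (l mod m)" m M] by simp
qed

lemma ldu_kron:
  "ldu (M * m) (kron m L1 L2) (kron_vec m d1 d2) (kron m U1 U2) i j
     = ldu M L1 d1 U1 (i div m) (j div m) * ldu m L2 d2 U2 (i mod m) (j mod m)"
proof -
  let ?h = "\<lambda>a b. L1 (i div m) a * d1 a * U1 a (j div m) * (L2 (i mod m) b * d2 b * U2 b (j mod m))"
  have "ldu (M * m) (kron m L1 L2) (kron_vec m d1 d2) (kron m U1 U2) i j
      = (\<Sum>l<M * m. ?h (l div m) (l mod m))"
    unfolding ldu_def kron_def kron_vec_def by (simp add: mult_ac)
  also have "\<dots> = (\<Sum>a<M. \<Sum>b<m. ?h a b)"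
    by (rule sum_div_mod)
  also have "\<dots> = ldu M L1 d1 U1 (i div m) (j div m) * ldu m L2 d2 U2 (i mod m) (j mod m)"
    unfolding ldu_def by (simp add: sum_product)
  finally show ?thesis .
qed

lemma unit_lower_kron:
  fixes L1 L2 :: "nat \<Rightarrow> nat \<Rightarrow> 'a::semiring_1"
  assumes "0 < m" "unit_lower L1" "unit_lower L2"
  shows "unit_lower (kron m L1 L2)"
proof -
  have "kron m L1 L2 i l = 0" if "i < l" for i l
  proof (cases "i div m < l div m")
    case False
    then have "i div m = l div m"
      using div_le_mono[of i l m] \<open>i < l\<close> by simp
    then have "i mod m < l mod m"
      using \<open>i < l\<close> by (metis div_mult_mod_eq add_less_cancel_left)
    then show ?thesis using assms(3) by (simp add: kron_def unit_lower_eq_0)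
  qed (use assms(2) in \<open>simp add: kron_def unit_lower_eq_0\<close>)
  then show ?thesis
    using assms by (simp add: unit_lower_def kron_def)
qed

lemma unit_upper_kron:
  fixes U1 U2 :: "nat \<Rightarrow> nat \<Rightarrow> 'a::semiring_1"
  assumes "0 < m" "unit_upper U1" "unit_upper U2"
  shows "unit_upper (kron m U1 U2)"
proof -
  have "(\<lambda>i j. kron m U1 U2 j i) = kron m (\<lambda>i j. U1 j i) (\<lambda>i j. U2 j i)"
    by (simp add: kron_def fun_eq_iff)
  then show ?thesis
    using unit_lower_kron[OF assms(1) assms(2,3)[unfolded unit_upper_def]]
    by (simp add: unit_upper_def)
qed

lemma rook_ldu_kron:
  assumes "0 < m" "rook_ldu M L1 d1 U1" "rook_ldu m L2 d2 U2"
  shows "rook_ldu (M * m) (kron m L1 L2) (kron_vec m d1 d2) (kron m U1 U2)"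
proof -
  have div_mod: "l div m < M" "l mod m < m" if "l < M * m" for l
    using that \<open>0 < m\<close> by (simp_all add: less_mult_imp_div_less)
  have "kron_vec m d1 d2 l \<in> \<real> \<and> kron_vec m d1 d2 l \<noteq> 0" if "l < M * m" for l
    using div_mod[OF that] assms(2,3) by (simp add: rook_ldu_def kron_vec_def)
  moreover have "norm (ldu (M * m) (kron m L1 L2) (kron_vec m d1 d2) (kron m U1 U2) i j) \<le> 1"
    if "i < M * m" "j < M * m" for i j
    using div_mod[OF that(1)] div_mod[OF that(2)] assms(2,3)
    by (simp add: rook_ldu_def ldu_kron norm_mult mult_le_one)
  moreover have "kron m L1 L2 i j \<in> \<real> \<and> kron m U1 U2 i j \<in> \<real> \<and>
      norm (kron m L1 L2 i j) \<le> 1 \<and> norm (kron m U1 U2 i j) \<le> 1" for i j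
    using assms(2,3) by (simp add: rook_ldu_def kron_def norm_mult mult_le_one)
  moreover have "unit_lower L1" "unit_lower L2" "unit_upper U1" "unit_upper U2"
    using assms(2,3) by (simp_all add: rook_ldu_def)
  then have "unit_lower (kron m L1 L2)" "unit_upper (kron m U1 U2)"
    using \<open>0 < m\<close> by (simp_all add: unit_lower_kron unit_upper_kron)
  ultimately show ?thesis
    by (simp add: rook_ldu_def)
qed

lemma rook_ldu_kron_power:
  assumes "0 < m" "rook_ldu m L d U"
  shows "\<exists>L' d' U'. rook_ldu (m ^ k) L' d' U' \<and> d' (m ^ k - 1) = d (m - 1) ^ k"
proof (induction k)
  case 0
  let ?I = "\<lambda>i j. if i = j then 1 else 0 :: complex"
  have "rook_ldu 1 ?I (\<lambda>_. 1) ?I"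
    by (simp add: rook_ldu_def unit_upper_def unit_lower_def ldu_def)
  then show ?case by auto
next
  case (Suc k)
  then obtain L' d' U' where IH: "rook_ldu (m ^ k) L' d' U'" "d' (m ^ k - 1) = d (m - 1) ^ k"
    by blast
  obtain q where "m ^ k = Suc q"
    using \<open>0 < m\<close> by (metis gr0_implies_Suc zero_less_power)
  then have "m ^ Suc k - 1 = (m ^ k - 1) * m + (m - 1)"
    using \<open>0 < m\<close> by (simp add: power_Suc2 mult.commute)
  then have "kron_vec m d' d (m ^ Suc k - 1) = d' (m ^ k - 1) * d (m - 1)"
    using \<open>0 < m\<close> by (simp only:) (rule kron_vec_index, simp)
  then have "kron_vec m d' d (m ^ Suc k - 1) = d (m - 1) ^ Suc k"
    using IH(2) by (simp add: mult.commute)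
  moreover have "rook_ldu (m ^ Suc k) (kron m L' L) (kron_vec m d' d) (kron m U' U)"
    using rook_ldu_kron[OF \<open>0 < m\<close> IH(1) assms(2)] by (simp add: mult.commute)
  ultimately show ?case by blast
qed

definition pad :: "nat \<Rightarrow> (nat \<Rightarrow> nat \<Rightarrow> 'a::{zero,one}) \<Rightarrow> nat \<Rightarrow> nat \<Rightarrow> 'a" where
  "pad N X i j = (if i < N \<and> j < N then X i j else if i = j then 1 else 0)"

definition pad_vec :: "nat \<Rightarrow> (nat \<Rightarrow> 'a::one) \<Rightarrow> nat \<Rightarrow> 'a" where
  "pad_vec N x l = (if l < N then x l else 1)"

lemma unit_lower_pad:
  assumes "\<And>i l. i < l \<Longrightarrow> l < N \<Longrightarrow> X i l = 0" "\<And>i. i < N \<Longrightarrow> X i i = 1"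
  shows "unit_lower (pad N X)"
  using assms by (simp add: unit_lower_def pad_def)

lemma pad_eq_delta:
  "N \<le> i \<Longrightarrow> pad N X i j = (if i = j then 1 else 0)"
  "N \<le> j \<Longrightarrow> pad N X i j = (if i = j then 1 else 0)"
  by (simp_all add: pad_def)

lemma ldu_pad:
  fixes L U :: "nat \<Rightarrow> nat \<Rightarrow> 'a::comm_semiring_1"
  assumes "N \<le> n" "i < n" "j < n"
  shows "ldu n (pad N L) (pad_vec N d) (pad N U) i j = pad N (ldu N L d U) i j"
proof -
  consider "i < N" "j < N" | "N \<le> i" | "N \<le> j" "i < N"
    by linarith
  then show ?thesis
  proof cases
    case 1
    have "(\<Sum>l<n. pad N L i l * pad_vec N d l * pad N U l j) = (\<Sum>l<N. L i l * d l * U l j)"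
      using 1 assms(1)
      by (intro sum.mono_neutral_cong_right) (auto simp: pad_def pad_vec_def)
    then show ?thesis
      using 1 by (simp add: ldu_def pad_def)
  next
    case 2
    have "(\<Sum>l<n. pad N L i l * pad_vec N d l * pad N U l j) = (\<Sum>l<n. if l = i then pad N U i j else 0)"
      using 2 by (intro sum.cong) (auto simp: pad_eq_delta(1) pad_vec_def)
    then show ?thesis
      using 2 assms(2) by (simp add: ldu_def pad_eq_delta)
  next
    case 3
    have "(\<Sum>l<n. pad N L i l * pad_vec N d l * pad N U l j) = (\<Sum>l<n. if l = j then pad N L i j else 0)"
      using 3 by (intro sum.cong) (auto simp: pad_eq_delta(2) pad_vec_def)
    then show ?thesis
      using 3 assms(3) by (simp add: ldu_def pad_eq_delta)
  qed
qed

lemma rook_ldu_pad: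
  assumes "rook_ldu N L d U" "N \<le> n"
  shows "rook_ldu n (pad N L) (pad_vec N d) (pad N U)"
proof -
  have L: "unit_lower L" and U: "unit_upper U"
    using assms(1) by (simp_all add: rook_ldu_def)
  have "unit_lower (pad N L)"
    using L by (intro unit_lower_pad) (simp_all add: unit_lower_eq_0 unit_lower_diag)
  moreover have "unit_upper (pad N U)"
  proof -
    have "(\<lambda>i j. pad N U j i) = pad N (\<lambda>i j. U j i)"
      by (auto simp: pad_def fun_eq_iff)
    then show ?thesis
      unfolding unit_upper_def using U
      by (simp, intro unit_lower_pad) (simp_all add: unit_upper_eq_0 unit_upper_diag)
  qed
  moreover have "pad N L i j \<in> \<real> \<and> pad N U i j \<in> \<real> \<and>
      norm (pad N L i j) \<le> 1 \<and> norm (pad N U i j) \<le> 1" for i j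
    using assms(1) by (simp add: rook_ldu_def pad_def)
  moreover have "pad_vec N d l \<in> \<real> \<and> pad_vec N d l \<noteq> 0" if "l < n" for l
    using assms(1) by (simp add: rook_ldu_def pad_vec_def)
  moreover have "norm (ldu n (pad N L) (pad_vec N d) (pad N U) i j) \<le> 1" if "i < n" "j < n" for i j
    using assms that by (simp add: rook_ldu_def ldu_pad pad_def)
  ultimately show ?thesis
    by (simp add: rook_ldu_def)
qed

lemma powr_of_nat_power:
  assumes "0 < m"
  shows "real (m ^ k) powr a = (real m powr a) ^ k"
  using assms by (simp add: powr_power[symmetric] powr_realpow[symmetric] powr_powr mult.commute)

lemma growth_sup_gt_powr:
  assumes "rook_ldu m L d U" "2 \<le> m" "0 < a" "real m powr a \<le> c" "c \<le> norm (d (m - 1))" "1 \<le> n"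
  shows "ereal (real n powr a / c) < growth_sup n (RP n \<real>)"
proof -
  obtain k where k: "m ^ k \<le> n" "n < m ^ (k + 1)"
    using ex_power_ivl1[OF assms(2,6)] by blast
  obtain L' d' U' where "rook_ldu (m ^ k) L' d' U'" and last: "d' (m ^ k - 1) = d (m - 1) ^ k"
    using rook_ldu_kron_power[OF _ assms(1)] assms(2) by fastforce
  then have "rook_ldu n (pad (m ^ k) L') (pad_vec (m ^ k) d') (pad (m ^ k) U')"
    using rook_ldu_pad k(1) by blast
  moreover have "0 < m ^ k"
    using assms(2) by simp
  then have "m ^ k - 1 < n"
    using k(1) by linarith
  ultimately have "ereal (norm (pad_vec (m ^ k) d' (m ^ k - 1))) \<le> growth_sup n (RP n \<real>)"
    by (rule growth_sup_ge_pivot)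
  moreover have "pad_vec (m ^ k) d' (m ^ k - 1) = d (m - 1) ^ k"
    using \<open>0 < m ^ k\<close> last by (simp add: pad_vec_def)
  ultimately have growth: "ereal (norm (d (m - 1)) ^ k) \<le> growth_sup n (RP n \<real>)"
    by (simp add: norm_power)
  have "0 < real m powr a"
    using assms(2) by simp
  then have "0 < c"
    using assms(4) by linarith
  have "real n < real (m ^ (k + 1))"
    using k(2) by (simp only: of_nat_less_iff)
  then have "real n powr a < real (m ^ (k + 1)) powr a"
    by (rule powr_less_mono2[OF assms(3), rotated]) simp
  also have "\<dots> = (real m powr a) ^ (k + 1)"
    using assms(2) by (intro powr_of_nat_power) simp
  also have "\<dots> \<le> c ^ (k + 1)"
    using assms(4) by (intro power_mono) simp_all
  finally have "real n powr a / c < c ^ k"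
    using \<open>0 < c\<close> by (simp add: divide_less_eq mult.commute)
  also have "c ^ k \<le> norm (d (m - 1)) ^ k"
    using assms(5) \<open>0 < c\<close> by (intro power_mono) simp_all
  finally have "ereal (real n powr a / c) < ereal (norm (d (m - 1)) ^ k)"
    by simp
  then show ?thesis
    using growth by (rule less_le_trans)
qed

subsection \<open>A 36 x 36 example\<close>

text \<open>Integer certificate of a factorisation A = L D U: L has entries L36 ! i ! j / 1024,
  U has entries U36t ! j ! i / 1024 (the columns of U are stored as rows), and the pivots
  are D36 ! l * 2^20 / scale36.  The last pivot is about 421.7, while 36 powr 1.669 < 400.\<close>

definition L36 :: "int list list" where "L36 = [
  [1024,0,0,0,0,0,0,0,0,0,0,0,0,0,0,0,0,0,0,0,0,0,0,0,0,0,0,0,0,0,0,0,0,0,0,0],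
  [-1,1024,0,0,0,0,0,0,0,0,0,0,0,0,0,0,0,0,0,0,0,0,0,0,0,0,0,0,0,0,0,0,0,0,0,0],
  [-10,8,1024,0,0,0,0,0,0,0,0,0,0,0,0,0,0,0,0,0,0,0,0,0,0,0,0,0,0,0,0,0,0,0,0,0],
  [4,1,-2,1024,0,0,0,0,0,0,0,0,0,0,0,0,0,0,0,0,0,0,0,0,0,0,0,0,0,0,0,0,0,0,0,0],
  [-12,3,9,4,1024,0,0,0,0,0,0,0,0,0,0,0,0,0,0,0,0,0,0,0,0,0,0,0,0,0,0,0,0,0,0,0],
  [7,3,-12,-2,3,1024,0,0,0,0,0,0,0,0,0,0,0,0,0,0,0,0,0,0,0,0,0,0,0,0,0,0,0,0,0,0],
  [7,-2,-5,0,2,-2,1024,0,0,0,0,0,0,0,0,0,0,0,0,0,0,0,0,0,0,0,0,0,0,0,0,0,0,0,0,0],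
  [-6,5,0,-8,18,-8,16,1024,0,0,0,0,0,0,0,0,0,0,0,0,0,0,0,0,0,0,0,0,0,0,0,0,0,0,0,0],
  [-572,206,-145,-402,748,384,-154,507,1024,0,0,0,0,0,0,0,0,0,0,0,0,0,0,0,0,0,0,0,0,0,0,0,0,0,0,0],
  [-1009,824,953,-48,-278,170,-147,31,-145,1024,0,0,0,0,0,0,0,0,0,0,0,0,0,0,0,0,0,0,0,0,0,0,0,0,0,0],
  [127,-234,-43,972,-1023,178,-666,-1024,-853,39,1024,0,0,0,0,0,0,0,0,0,0,0,0,0,0,0,0,0,0,0,0,0,0,0,0,0],
  [-735,-563,-164,-209,-802,177,-976,-353,307,479,757,1024,0,0,0,0,0,0,0,0,0,0,0,0,0,0,0,0,0,0,0,0,0,0,0,0],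
  [573,46,-257,-266,962,-481,1022,759,323,-248,-499,-304,1024,0,0,0,0,0,0,0,0,0,0,0,0,0,0,0,0,0,0,0,0,0,0,0],
  [740,1024,1024,1024,945,-385,880,392,-676,302,-378,-859,945,1024,0,0,0,0,0,0,0,0,0,0,0,0,0,0,0,0,0,0,0,0,0,0],
  [-1024,1020,1024,917,-1024,946,-980,-391,-376,767,473,64,-783,-34,1024,0,0,0,0,0,0,0,0,0,0,0,0,0,0,0,0,0,0,0,0,0],
  [829,1024,-74,733,590,38,869,-50,-772,-269,-241,-807,482,468,-13,1024,0,0,0,0,0,0,0,0,0,0,0,0,0,0,0,0,0,0,0,0],
  [-586,1022,-1022,-931,998,807,-273,1024,1024,-455,-1016,-301,70,390,255,126,1024,0,0,0,0,0,0,0,0,0,0,0,0,0,0,0,0,0,0,0],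
  [554,1023,807,1008,1013,-1024,907,29,-858,544,-214,-541,1010,1011,-621,597,-136,1024,0,0,0,0,0,0,0,0,0,0,0,0,0,0,0,0,0,0],
  [1024,1024,-1020,867,274,586,347,-838,-973,-988,53,-759,231,-274,71,854,-10,-596,1024,0,0,0,0,0,0,0,0,0,0,0,0,0,0,0,0,0],
  [-1024,1007,-1019,1021,1016,-1024,-1005,-1024,1024,-989,564,-282,-256,-765,583,130,-1,703,-582,1024,0,0,0,0,0,0,0,0,0,0,0,0,0,0,0,0],
  [-1024,587,-1024,1024,-508,1024,968,922,522,-135,-1022,-944,-746,66,470,225,371,-135,-821,-13,1024,0,0,0,0,0,0,0,0,0,0,0,0,0,0,0],
  [969,-479,-1021,1024,-1024,-249,-1020,-1024,-1003,-1024,1024,144,-579,-832,-81,935,-393,-208,414,99,-266,1024,0,0,0,0,0,0,0,0,0,0,0,0,0,0],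
  [-1023,-114,1009,-587,1024,816,1018,-1024,906,1024,781,781,1024,-1006,-534,956,-1010,-1024,1015,209,-133,-798,1024,0,0,0,0,0,0,0,0,0,0,0,0,0],
  [1024,947,173,-1012,1024,201,-1023,-545,-1024,-102,1020,442,-1024,-739,911,-1024,-768,1024,954,-446,-1024,1022,-978,1024,0,0,0,0,0,0,0,0,0,0,0,0],
  [-1024,1024,-1024,-139,1024,-1024,-1021,753,-713,1024,1024,687,1024,967,-423,-110,1008,1024,-282,-6,-814,1024,-593,-321,1024,0,0,0,0,0,0,0,0,0,0,0],
  [-1024,-1024,1013,-1024,-524,-1024,-1024,-887,-1024,505,-1024,-994,706,-1023,986,988,-319,-1024,-357,732,-886,1024,1001,-1022,46,1024,0,0,0,0,0,0,0,0,0,0],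
  [883,960,1024,1021,996,-1024,-1024,-1024,954,-1024,-762,-1024,1024,-126,607,-43,188,322,-620,752,-91,135,353,-43,-254,108,1024,0,0,0,0,0,0,0,0,0],
  [1023,1024,-942,-1024,-1024,1024,-1004,1016,953,-1024,148,630,1024,293,-1024,1024,-1024,1024,1024,380,-1024,-690,-1024,-1024,1018,-993,-1024,1024,0,0,0,0,0,0,0,0],
  [-1019,1019,1024,-1024,-33,1024,1024,723,1024,975,1024,-37,-606,-416,1022,-687,-1024,213,-1024,165,-877,1023,-409,-444,1024,395,-1024,62,1024,0,0,0,0,0,0,0],
  [-1022,851,-1024,-1023,1024,-1024,-1024,1017,1024,877,196,-1024,-412,-337,-1023,-1024,-766,-1024,-1024,-1024,-1014,-1024,1024,1024,1024,-1024,-981,-414,-411,1024,0,0,0,0,0,0],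
  [-1024,-1023,-1023,1024,-1024,1020,-1023,1024,-558,613,-1024,1024,1024,-756,-1015,-1024,-1021,1021,318,417,148,-1020,-918,-350,1007,-943,-886,750,-412,10,1024,0,0,0,0,0],
  [-1013,-1024,-1024,-1024,-996,-1024,1012,936,-1024,1024,633,-1024,186,1024,1024,1024,859,1024,1024,1024,-1024,-1024,-40,1024,-720,955,-915,-703,1024,-444,970,1024,0,0,0,0],
  [-1024,1024,-1024,997,-1024,-1004,1024,-1024,1018,-1024,1012,-254,1024,1024,1023,-1024,-1024,-1024,-1023,-1024,-1024,1024,1024,-636,-1024,-946,-993,832,-1024,953,1024,-1023,1024,0,0,0],
  [1024,-729,1024,1022,-1024,-1012,-1024,1024,1023,1024,1024,-412,1018,-1023,-967,1024,1024,-1024,-1024,915,-1023,-1024,-1024,1024,-969,1024,-922,-721,-1023,323,-154,-1024,-5,1024,0,0],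
  [-992,-1024,-1024,1024,1023,1007,-1015,-1024,1024,1024,-1024,-1024,1022,-1024,-792,-1023,1024,-1023,763,85,-642,1024,-797,1024,-1023,-161,-1024,1024,1024,-215,-1024,-746,-391,101,1024,0],
  [1024,1024,1014,-1024,1024,1024,-1024,-1024,-1024,-1024,-1024,1024,1024,-1024,1024,-964,-1024,1024,-1024,-1024,1024,1024,1024,-1024,1024,-1024,-1024,-1024,-1024,-1024,-1024,1024,1024,1024,1024,1024]]"

definition U36t :: "int list list" where "U36t = [
  [1024,0,0,0,0,0,0,0,0,0,0,0,0,0,0,0,0,0,0,0,0,0,0,0,0,0,0,0,0,0,0,0,0,0,0,0],
  [-4,1024,0,0,0,0,0,0,0,0,0,0,0,0,0,0,0,0,0,0,0,0,0,0,0,0,0,0,0,0,0,0,0,0,0,0],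
  [-5,-2,1024,0,0,0,0,0,0,0,0,0,0,0,0,0,0,0,0,0,0,0,0,0,0,0,0,0,0,0,0,0,0,0,0,0],
  [-2,2,3,1024,0,0,0,0,0,0,0,0,0,0,0,0,0,0,0,0,0,0,0,0,0,0,0,0,0,0,0,0,0,0,0,0],
  [7,-1,-2,9,1024,0,0,0,0,0,0,0,0,0,0,0,0,0,0,0,0,0,0,0,0,0,0,0,0,0,0,0,0,0,0,0],
  [-4,-4,1,1,8,1024,0,0,0,0,0,0,0,0,0,0,0,0,0,0,0,0,0,0,0,0,0,0,0,0,0,0,0,0,0,0],
  [3,-3,-1,1,4,-2,1024,0,0,0,0,0,0,0,0,0,0,0,0,0,0,0,0,0,0,0,0,0,0,0,0,0,0,0,0,0],
  [17,18,4,45,20,19,19,1024,0,0,0,0,0,0,0,0,0,0,0,0,0,0,0,0,0,0,0,0,0,0,0,0,0,0,0,0],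
  [157,-114,-69,-144,27,-75,70,-113,1024,0,0,0,0,0,0,0,0,0,0,0,0,0,0,0,0,0,0,0,0,0,0,0,0,0,0,0],
  [1011,906,-858,-250,-662,-83,283,-997,263,1024,0,0,0,0,0,0,0,0,0,0,0,0,0,0,0,0,0,0,0,0,0,0,0,0,0,0],
  [-946,-1021,905,535,893,595,-428,1019,-418,-692,1024,0,0,0,0,0,0,0,0,0,0,0,0,0,0,0,0,0,0,0,0,0,0,0,0,0],
  [798,866,-793,-205,-673,-1024,667,-937,453,782,-879,1024,0,0,0,0,0,0,0,0,0,0,0,0,0,0,0,0,0,0,0,0,0,0,0,0],
  [-1024,-1011,676,171,755,924,-410,954,-608,-1001,976,-566,1024,0,0,0,0,0,0,0,0,0,0,0,0,0,0,0,0,0,0,0,0,0,0,0],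
  [-280,-1024,551,20,546,1023,-1022,-70,207,-317,419,-337,190,1024,0,0,0,0,0,0,0,0,0,0,0,0,0,0,0,0,0,0,0,0,0,0],
  [1024,-6,-1002,646,116,-350,-199,286,819,842,-417,594,156,-73,1024,0,0,0,0,0,0,0,0,0,0,0,0,0,0,0,0,0,0,0,0,0],
  [815,906,-1024,200,-353,-827,4,-659,739,1021,-887,750,-331,-15,416,1024,0,0,0,0,0,0,0,0,0,0,0,0,0,0,0,0,0,0,0,0],
  [-1024,1012,930,-1015,-1024,158,1006,-180,-1024,-1023,412,-197,436,-715,-935,-909,1024,0,0,0,0,0,0,0,0,0,0,0,0,0,0,0,0,0,0,0],
  [-953,110,999,-839,-1024,257,830,-886,-76,-699,355,-898,197,-506,-928,-733,386,1024,0,0,0,0,0,0,0,0,0,0,0,0,0,0,0,0,0,0],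
  [-912,563,1003,158,-412,-668,-49,1010,-17,-656,-107,-33,418,-277,175,-602,127,-298,1024,0,0,0,0,0,0,0,0,0,0,0,0,0,0,0,0,0],
  [1006,1019,-1024,-1024,220,688,-45,-1010,-1024,255,-413,662,-371,1024,-363,-1023,-287,-1024,-664,1024,0,0,0,0,0,0,0,0,0,0,0,0,0,0,0,0],
  [983,1024,-1020,-1023,-760,-1019,-1024,489,425,954,1024,-784,1024,27,508,-914,-493,-583,656,347,1024,0,0,0,0,0,0,0,0,0,0,0,0,0,0,0],
  [693,362,-279,-1023,-997,-1024,-1015,1024,1024,768,769,-1024,704,293,-223,-316,-607,-183,738,269,914,1024,0,0,0,0,0,0,0,0,0,0,0,0,0,0],
  [1024,1023,527,1024,-1023,1014,1022,1024,-33,92,-366,654,-1023,-628,-1023,-1024,1024,1024,323,449,-680,475,1024,0,0,0,0,0,0,0,0,0,0,0,0,0],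
  [-1021,1024,542,-1023,-1024,1024,-189,487,-1003,-1024,-840,1024,1021,1024,-831,311,-871,-526,-696,773,224,1024,207,1024,0,0,0,0,0,0,0,0,0,0,0,0],
  [-1022,-910,1024,1023,-1024,-983,998,-1024,853,-1024,-1024,1014,1024,771,1023,1018,102,-1017,240,-120,-1,310,-259,855,1024,0,0,0,0,0,0,0,0,0,0,0],
  [-839,1024,-1024,1024,-1017,1024,-1024,-975,1024,-1024,-976,184,1024,403,-1024,-1024,-1024,914,114,-1024,-98,-515,113,137,189,1024,0,0,0,0,0,0,0,0,0,0],
  [-67,-1019,-587,-1024,297,1021,679,353,-1023,1024,1024,-958,738,-1024,779,697,175,288,-1024,-107,-254,-350,-334,-264,-358,-513,1024,0,0,0,0,0,0,0,0,0],
  [1024,1023,1024,-750,91,-1024,-1024,1007,-1024,-1004,1024,1024,1024,-1024,1024,1024,1023,1024,-1024,-933,1022,-1019,1024,1023,648,845,-1024,1024,0,0,0,0,0,0,0,0],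
  [-1024,1024,-1023,1024,75,-1009,-1015,1012,-994,25,-1024,1024,1024,-1024,314,1024,-1023,-1022,-1024,-952,-698,-1017,-942,-813,-1024,-511,851,-558,1024,0,0,0,0,0,0,0],
  [1024,-1024,1019,-1024,1024,1024,-108,-1017,-1019,927,-1024,1024,1024,-1024,1024,1013,1023,1024,1024,952,1024,1024,-785,-1024,-905,-923,-656,-860,899,1024,0,0,0,0,0,0],
  [1024,1024,1024,-986,1024,-1024,-1024,-1024,1024,358,1024,-1015,-885,-1023,-1024,1024,1018,-1010,-1009,-1024,164,-53,-137,-112,103,-69,-21,235,123,-462,1024,0,0,0,0,0],
  [902,1024,1023,1024,1022,1024,1024,-1023,1024,321,1022,1024,1024,-1024,-1024,-1024,1024,-1024,-1024,75,618,1024,-1024,-144,-1024,989,-1022,1024,-1024,1020,-539,1024,0,0,0,0],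
  [1017,-1024,1024,1022,1024,-613,-1024,1024,-802,1024,-1023,1020,-1024,-1024,-1024,986,1024,-1024,1024,1024,1024,-1024,-1024,1023,999,1024,1024,977,1024,1001,-1017,379,1024,0,0,0],
  [-1024,1024,-1022,-1018,1024,-1024,1024,-1023,-995,-750,929,1024,-1007,1024,1024,-1024,-19,1009,1007,-1023,951,1024,1019,-1024,-816,-81,1024,1024,1016,1022,1024,443,-762,1024,0,0],
  [1024,1022,1024,-1024,-1024,1024,1024,1024,1024,-1021,1024,1024,-1023,1023,149,1024,-1022,1011,1024,807,442,-1024,-1024,-1021,491,1024,1024,-1024,-1024,1003,1024,-113,-127,-461,1024,0],
  [-1024,-1024,-1024,1024,-1024,-1024,1024,1024,1024,1024,1024,-1024,-981,1024,-1024,1024,1024,-1024,1024,1024,-1024,-1024,-1024,1024,-1024,1024,1024,1024,1024,1024,1024,-1024,-1024,-1024,-1024,1024]]"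

definition D36 :: "int list" where "D36 = [4096,4092,4107,4104,4103,4099,4108,4131,4574,8085,6528,8056,5775,8999,9300,6643,11255,9013,9575,22743,20889,11650,26300,30151,28741,52361,19844,75834,43421,124375,49959,181622,268765,333963,331441,1746154]"

definition scale36 :: int where "scale36 = 4341510062"


lemma cert36_shape:
  "length L36 = 36 \<and> length U36t = 36 \<and> length D36 = 36 \<and>
   list_all (\<lambda>i. length (L36 ! i) = 36 \<and> length (U36t ! i) = 36 \<and>
     list_all (\<lambda>j. (i < j \<longrightarrow> L36 ! i ! j = 0 \<and> U36t ! i ! j = 0) \<and>
       \<bar>L36 ! i ! j\<bar> \<le> 1024 \<and> \<bar>U36t ! i ! j\<bar> \<le> 1024) [0..<36] \<and>
     L36 ! i ! i = 1024 \<and> U36t ! i ! i = 1024 \<and> 0 < D36 ! i) [0..<36]"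
  by code_simp

lemma cert36_entries:
  "list_all (\<lambda>i. list_all (\<lambda>j.
     \<bar>sum_list (map2 (*) (L36 ! i) (map2 (*) D36 (U36t ! j)))\<bar> \<le> scale36) [0..<36]) [0..<36]"
  by code_simp

lemma cert36_last_pivot: "0 < scale36 \<and> 400 * scale36 \<le> D36 ! 35 * 2 ^ 20"
  by code_simp

definition cert36_mat :: "int list list \<Rightarrow> nat \<Rightarrow> nat \<Rightarrow> complex" where
  "cert36_mat X = pad 36 (\<lambda>i j. of_int (X ! i ! j) / 1024)"

definition L_ex :: "nat \<Rightarrow> nat \<Rightarrow> complex" where
  "L_ex = cert36_mat L36"

definition U_ex :: "nat \<Rightarrow> nat \<Rightarrow> complex" where
  "U_ex l j = cert36_mat U36t j l"

definition d_ex :: "nat \<Rightarrow> complex" where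
  "d_ex = pad_vec 36 (\<lambda>l. of_int (D36 ! l) * 2 ^ 20 / of_int scale36)"

lemma cert36_mat_real: "cert36_mat X i j \<in> \<real>"
  by (simp add: cert36_mat_def pad_def)

lemma cert36_mat_factor:
  assumes "X = L36 \<or> X = U36t"
  shows "unit_lower (cert36_mat X)" and "norm (cert36_mat X i j) \<le> 1"
proof -
  have shape: "i < j \<Longrightarrow> j < 36 \<Longrightarrow> X ! i ! j = 0" "i < 36 \<Longrightarrow> X ! i ! i = 1024"
    "i < 36 \<Longrightarrow> j < 36 \<Longrightarrow> \<bar>X ! i ! j\<bar> \<le> 1024" for i j
    using cert36_shape assms by (auto simp: list_all_iff)
  show "unit_lower (cert36_mat X)"
    unfolding cert36_mat_def using shape(1,2) by (intro unit_lower_pad) auto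
  have "\<bar>real_of_int (X ! i ! j)\<bar> \<le> 1024" if "i < 36" "j < 36"
    using shape(3)[OF that] by linarith
  then show "norm (cert36_mat X i j) \<le> 1"
    by (simp add: cert36_mat_def pad_def norm_divide)
qed

lemma ldu_ex_entry:
  assumes "i < 36" "j < 36"
  shows "ldu 36 L_ex d_ex U_ex i j
    = of_int (sum_list (map2 (*) (L36 ! i) (map2 (*) D36 (U36t ! j)))) / of_int scale36"
proof -
  have "length (L36 ! i) = 36" "length (U36t ! j) = 36" "length D36 = 36"
    using cert36_shape assms by (auto simp: list_all_iff)
  then have "sum_list (map2 (*) (L36 ! i) (map2 (*) D36 (U36t ! j)))
      = (\<Sum>l<36. L36 ! i ! l * (D36 ! l * U36t ! j ! l))"
    by (simp add: sum_list_sum_nth atLeast0LessThan)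
  moreover have "ldu 36 L_ex d_ex U_ex i j
      = (\<Sum>l<36. of_int (L36 ! i ! l * (D36 ! l * U36t ! j ! l))) / of_int scale36"
    unfolding ldu_def sum_divide_distrib using assms
    by (intro sum.cong) (simp_all add: L_ex_def U_ex_def d_ex_def cert36_mat_def pad_def pad_vec_def)
  ultimately show ?thesis by simp
qed

lemma rook_ldu_ex: "rook_ldu 36 L_ex d_ex U_ex"
proof -
  have "unit_lower L_ex" "unit_upper U_ex"
    using cert36_mat_factor(1) by (simp_all add: L_ex_def U_ex_def unit_upper_def)
  moreover have "L_ex i j \<in> \<real> \<and> U_ex i j \<in> \<real> \<and> norm (L_ex i j) \<le> 1 \<and> norm (U_ex i j) \<le> 1" for i j
    using cert36_mat_real cert36_mat_factor(2) by (simp add: L_ex_def U_ex_def)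
  moreover have "d_ex l \<in> \<real> \<and> d_ex l \<noteq> 0" if "l < 36" for l
  proof -
    have "\<forall>l \<in> set [0..<36]. 0 < D36 ! l"
      using cert36_shape by (auto simp: list_all_iff)
    then have "0 < D36 ! l"
      using that by simp
    then show ?thesis
      using cert36_last_pivot that by (simp add: d_ex_def pad_vec_def)
  qed
  moreover have "norm (ldu 36 L_ex d_ex U_ex i j) \<le> 1" if "i < 36" "j < 36" for i j
  proof -
    let ?s = "sum_list (map2 (*) (L36 ! i) (map2 (*) D36 (U36t ! j)))"
    have "\<bar>?s\<bar> \<le> scale36"
      using cert36_entries that by (simp add: list_all_iff)
    then have "\<bar>real_of_int ?s\<bar> \<le> real_of_int scale36"
      by linarith
    then show ?thesis
      using cert36_last_pivot by (simp add: ldu_ex_entry[OF that] norm_divide)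
  qed
  ultimately show ?thesis by (simp add: rook_ldu_def)
qed

lemma d_ex_last: "400 \<le> norm (d_ex 35)"
proof -
  have "0 < scale36" "25 * scale36 \<le> 65536 * D36 ! 35"
    using cert36_last_pivot by simp_all
  then have "0 < D36 ! 35"
    by linarith
  have "real_of_int (25 * scale36) \<le> real_of_int (65536 * D36 ! 35)"
    using \<open>25 * scale36 \<le> 65536 * D36 ! 35\<close> by (simp only: of_int_le_iff)
  then have "400 \<le> real_of_int (D36 ! 35) * 2 ^ 20 / real_of_int scale36"
    using \<open>0 < scale36\<close> by (simp add: le_divide_eq)
  also have "\<dots> = norm (d_ex 35)"
    using \<open>0 < scale36\<close> \<open>0 < D36 ! 35\<close> by (simp add: d_ex_def pad_vec_def norm_divide norm_mult)
  finally show ?thesis .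
qed

lemma powr_36_le_400: "real 36 powr 1.669 \<le> 400"
proof -
  have "((36::real) powr (107 / 64)) ^ 64 = 36 powr (real 64 * (107 / 64))"
    by (rule powr_power) simp
  also have "\<dots> = 36 powr real (107::nat)"
    by simp
  also have "\<dots> = 36 ^ 107"
    by (rule powr_realpow) simp
  finally have "((36::real) powr (107 / 64)) ^ 64 \<le> 400 ^ 64"
    by simp
  then have "(36::real) powr (107 / 64) \<le> 400"
    by (subst (asm) power_mono_iff) simp_all
  moreover have "real 36 powr 1.669 \<le> 36 powr (107 / 64)"
    by (simp only: of_nat_numeral) (rule powr_mono; simp)
  ultimately show ?thesis
    by linarith
qed

theorem theorem1p2:
  fixes n :: nat
  assumes "n \<ge> 1"
  shows "growth_sup n (RP n \<real>) > ereal (real n powr 1.669 / 641)"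
proof -
  have "ereal (real n powr 1.669 / 400) < growth_sup n (RP n \<real>)"
    using growth_sup_gt_powr[OF rook_ldu_ex _ _ powr_36_le_400 _ assms] d_ex_last by simp
  moreover have "real n powr 1.669 / 641 \<le> real n powr 1.669 / 400"
    by (simp add: divide_left_mono)
  ultimately show ?thesis
    by (meson ereal_less_eq(3) order_le_less_trans)
qed

end
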